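(* Let $G=(V,E)$ be a (finite or infinite) graph and $\psi:(0,+\infty)\to\mathbb R$ a $C^1$ concave function with $\psi'(1)=0$. Let $\sigma\in\mathbb R$ be a constant and $c:[0,+\infty)\to\mathbb R$ a continuous function such that either ($c\ge0$ and $\sigma\le1$) or ($c\le0$ and $\sigma\ge1$). Suppose $u:V\times[0,\infty)\to(0,\infty)$ is a positive solution of $\partial_tu=\Delta u+c(t)u^\sigma$ on $V$. Then, at every vertex and every time, $$\mathcal L(-u\Delta^\psi u)\ge 2u\Gamma_2^\psi(u)+c\,u^\sigma\Delta^\psi u,$$ where $\mathcal L=\Delta-\partial_t$.
   Context: Graphs: $G=(V,E)$ is a connected, locally finite graph; each edge $xy$ carries a weight $w_{xy}>0$ (possibly asymmetric), and $\mu:V\to(0,\infty)$ is a vertex measure; $y\sim x$ means $xy\in E$. Laplacian: $\Delta f(x)=\frac{1}{\mu(x)}\sum_{y\sim x}w_{xy}(f(y)-f(x))$. For $f:V\to(0,\infty)$: $\Delta^\psi f(x)=\Delta\big[\psi\big(\tfrac{f}{f(x)}\big)\big](x)$; $(\Omega^\psi f)(x)=\Delta\big[\psi'\big(\tfrac{f}{f(x)}\big)\tfrac{f}{f(x)}\big(\tfrac{\Delta f}{f}-\tfrac{\Delta f(x)}{f(x)}\big)\big](x)$; $2\Gamma_2^\psi(f)=\Omega^\psi f+\frac{\Delta f\,\Delta^\psi f}{f}-\frac{\Delta(f\Delta^\psi f)}{f}$. A positive solution is continuously differentiable in $t$, and all operators are applied to $u(\cdot,t)$ at each fixed time. *)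

theory Defs
  imports "HOL-Analysis.Analysis"
begin

definition weighted_graph :: "('v \<Rightarrow> 'v \<Rightarrow> bool) \<Rightarrow> ('v \<Rightarrow> 'v \<Rightarrow> real) \<Rightarrow> ('v \<Rightarrow> real) \<Rightarrow> bool" where
  "weighted_graph E w mu \<longleftrightarrow>
     (\<forall>x y. E x y \<longrightarrow> E y x) \<and> (\<forall>x. \<not> E x x) \<and>
     (\<forall>x. finite {y. E x y}) \<and> (\<forall>x y. E\<^sup>*\<^sup>* x y) \<and>
     (\<forall>x y. E x y \<longrightarrow> w x y > 0) \<and> (\<forall>x. mu x > 0)"

definition Lap :: "('v \<Rightarrow> 'v \<Rightarrow> bool) \<Rightarrow> ('v \<Rightarrow> 'v \<Rightarrow> real) \<Rightarrow> ('v \<Rightarrow> real) \<Rightarrow> ('v \<Rightarrow> real) \<Rightarrow> 'v \<Rightarrow> real" where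
  "Lap E w mu f x = (1 / mu x) * (\<Sum>y\<in>{y. E x y}. w x y * (f y - f x))"

definition LapPsi :: "('v \<Rightarrow> 'v \<Rightarrow> bool) \<Rightarrow> ('v \<Rightarrow> 'v \<Rightarrow> real) \<Rightarrow> ('v \<Rightarrow> real) \<Rightarrow> (real \<Rightarrow> real) \<Rightarrow> ('v \<Rightarrow> real) \<Rightarrow> 'v \<Rightarrow> real" where
  "LapPsi E w mu \<psi> f x = Lap E w mu (\<lambda>y. \<psi> (f y / f x)) x"

definition OmegaPsi :: "('v \<Rightarrow> 'v \<Rightarrow> bool) \<Rightarrow> ('v \<Rightarrow> 'v \<Rightarrow> real) \<Rightarrow> ('v \<Rightarrow> real) \<Rightarrow> (real \<Rightarrow> real) \<Rightarrow> ('v \<Rightarrow> real) \<Rightarrow> 'v \<Rightarrow> real" where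
  "OmegaPsi E w mu \<psi> f x = Lap E w mu
     (\<lambda>y. deriv \<psi> (f y / f x) * (f y / f x) *
          (Lap E w mu f y / f y - Lap E w mu f x / f x)) x"

text \<open>Gamma2Psi f x is Gamma_2^psi(f)(x), i.e. one half of the right-hand side defining 2 Gamma_2^psi.\<close>
definition Gamma2Psi :: "('v \<Rightarrow> 'v \<Rightarrow> bool) \<Rightarrow> ('v \<Rightarrow> 'v \<Rightarrow> real) \<Rightarrow> ('v \<Rightarrow> real) \<Rightarrow> (real \<Rightarrow> real) \<Rightarrow> ('v \<Rightarrow> real) \<Rightarrow> 'v \<Rightarrow> real" where
  "Gamma2Psi E w mu \<psi> f x =
     (OmegaPsi E w mu \<psi> f x
      + Lap E w mu f x * LapPsi E w mu \<psi> f x / f x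
      - Lap E w mu (\<lambda>y. f y * LapPsi E w mu \<psi> f y) x / f x) / 2"

end

theory Submission
  imports Defs
begin

text \<open>
  Write \<open>r = u(y)/u(x)\<close>. Differentiating \<open>\<Delta>\<^sup>\<psi>u(x)\<close> in time gives
  \<open>\<Delta>[\<psi>'(r) r (\<partial>\<^sub>tu/u - \<partial>\<^sub>tu(x)/u(x))](x)\<close>, which differs from \<open>\<Omega>\<^sup>\<psi>u(x)\<close> only by
  replacing \<open>\<Delta>u\<close> with \<open>\<partial>\<^sub>tu = \<Delta>u + c u\<^sup>\<sigma>\<close>. After cancelling the terms containing
  \<open>\<Delta>u\<close>, the claim reduces to \<open>\<Delta>[\<psi>'(r) r c (u\<^sup>\<sigma>\<^sup>-\<^sup>1 - u(x)\<^sup>\<sigma>\<^sup>-\<^sup>1)](x) \<ge> 0\<close>.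
  Each term is nonnegative: concavity and \<open>\<psi>'(1) = 0\<close> make \<open>\<psi>'(r)\<close> have the sign of
  \<open>u(x) - u(y)\<close>, and the sign condition on \<open>c, \<sigma>\<close> makes \<open>c (u(y)\<^sup>\<sigma>\<^sup>-\<^sup>1 - u(x)\<^sup>\<sigma>\<^sup>-\<^sup>1)\<close>
  have the same sign.
\<close>

lemma Lap_uminus: "Lap E w mu (\<lambda>y. - f y) x = - Lap E w mu f x"
proof -
  have "w x y * (- f y - - f x) = - (w x y * (f y - f x))" for y
    by (simp add: algebra_simps)
  then show ?thesis by (simp add: Lap_def sum_negf)
qed

lemma Lap_mono:
  assumes "weighted_graph E w mu"
    and "\<And>y. E x y \<Longrightarrow> f y - f x \<le> g y - g x"
  shows "Lap E w mu f x \<le> Lap E w mu g x"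
proof -
  have "(\<Sum>y\<in>{y. E x y}. w x y * (f y - f x)) \<le> (\<Sum>y\<in>{y. E x y}. w x y * (g y - g x))"
    using assms by (intro sum_mono mult_left_mono) (auto simp: weighted_graph_def less_imp_le)
  moreover have "mu x > 0" using assms(1) by (simp add: weighted_graph_def)
  ultimately show ?thesis by (simp add: Lap_def divide_right_mono)
qed

text \<open>The derivative of \<open>\<Delta>\<^sup>\<psi>f(x)\<close> when \<open>f\<close> moves with velocity \<open>v\<close>;
  \<open>\<Omega>\<^sup>\<psi>f\<close> is the case \<open>v = \<Delta>f\<close>.\<close>
definition LapPsi_velocity ::
    "('v \<Rightarrow> 'v \<Rightarrow> bool) \<Rightarrow> ('v \<Rightarrow> 'v \<Rightarrow> real) \<Rightarrow> ('v \<Rightarrow> real) \<Rightarrow> (real \<Rightarrow> real)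
      \<Rightarrow> ('v \<Rightarrow> real) \<Rightarrow> ('v \<Rightarrow> real) \<Rightarrow> 'v \<Rightarrow> real" where
  "LapPsi_velocity E w mu \<psi> f v x =
     Lap E w mu (\<lambda>y. deriv \<psi> (f y / f x) * (f y / f x) * (v y / f y - v x / f x)) x"

lemma has_real_derivative_LapPsi:
  fixes u :: "'v \<Rightarrow> real \<Rightarrow> real"
  assumes psi_diff: "\<And>s. s > 0 \<Longrightarrow> \<psi> differentiable (at s)"
    and pos: "\<And>y. u y t > 0"
    and du: "\<And>y. ((\<lambda>s. u y s) has_real_derivative a y) (at t within S)"
  shows "((\<lambda>s. LapPsi E w mu \<psi> (\<lambda>y. u y s) x) has_real_derivative
           LapPsi_velocity E w mu \<psi> (\<lambda>y. u y t) a x) (at t within S)"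
proof -
  define d where "d y = deriv \<psi> (u y t / u x t) * (u y t / u x t) * (a y / u y t - a x / u x t)"
    for y
  have d: "((\<lambda>s. \<psi> (u y s / u x s)) has_real_derivative d y) (at t within S)" for y
  proof -
    have "(\<psi> has_real_derivative deriv \<psi> (u y t / u x t)) (at (u y t / u x t))"
      using psi_diff pos by (simp add: DERIV_deriv_iff_real_differentiable)
    moreover have "((\<lambda>s. u y s / u x s) has_real_derivative
        (a y * u x t - u y t * a x) / (u x t * u x t)) (at t within S)"
      using DERIV_divide[OF du du] pos[of x] by simp
    ultimately have "((\<lambda>s. \<psi> (u y s / u x s)) has_real_derivative
        deriv \<psi> (u y t / u x t) * ((a y * u x t - u y t * a x) / (u x t * u x t))) (at t within S)"
      by (rule DERIV_chain2)
    moreover have "deriv \<psi> (u y t / u x t) * ((a y * u x t - u y t * a x) / (u x t * u x t)) = d y"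
      using pos[of x] pos[of y] by (simp add: d_def field_simps)
    ultimately show ?thesis by simp
  qed
  have "((\<lambda>s. (1 / mu x) * (\<Sum>y\<in>{y. E x y}. w x y * (\<psi> (u y s / u x s) - \<psi> (u x s / u x s))))
      has_real_derivative (1 / mu x) * (\<Sum>y\<in>{y. E x y}. w x y * (d y - d x))) (at t within S)"
    by (intro DERIV_cmult DERIV_sum DERIV_diff d)
  then show ?thesis by (simp add: LapPsi_def LapPsi_velocity_def Lap_def d_def)
qed

lemma concave_deriv_antimono:
  fixes \<psi> :: "real \<Rightarrow> real"
  assumes psi_diff: "\<And>s. s > 0 \<Longrightarrow> \<psi> differentiable (at s)"
    and concave: "concave_on {0<..} \<psi>"
    and r: "r > 0" and p: "p > 0"
  shows "(deriv \<psi> r - deriv \<psi> p) * (p - r) \<ge> 0"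
proof -
  have convex: "convex_on {0<..} (\<lambda>s. - \<psi> s)" using concave by (simp add: concave_on_def)
  have deriv: "((\<lambda>s. - \<psi> s) has_field_derivative - deriv \<psi> s) (at s within {0<..})"
    if "s > 0" for s
    using psi_diff[OF that]
    by (intro has_field_derivative_at_within[OF DERIV_minus])
      (simp add: DERIV_deriv_iff_real_differentiable)
  have interior: "s \<in> interior {0<..}" if "s > 0" for s :: real
    using that by (simp add: interior_open)
  have "- \<psi> p - - \<psi> r \<ge> - deriv \<psi> r * (p - r)"
    by (rule convex_on_imp_above_tangent[OF convex connected_Ioi interior[OF r] _ deriv[OF r]])
      (use p in simp)
  moreover have "- \<psi> r - - \<psi> p \<ge> - deriv \<psi> p * (r - p)"
    by (rule convex_on_imp_above_tangent[OF convex connected_Ioi interior[OF p] _ deriv[OF p]])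
      (use r in simp)
  ultimately show ?thesis by (simp add: algebra_simps)
qed

lemma powr_reaction_sign:
  fixes a b c \<sigma> :: real
  assumes a: "a > 0" and b: "b > 0"
    and sign: "(c \<ge> 0 \<and> \<sigma> \<le> 1) \<or> (c \<le> 0 \<and> \<sigma> \<ge> 1)"
  shows "c * (b powr (\<sigma> - 1) - a powr (\<sigma> - 1)) * (a - b) \<ge> 0"
  using sign
proof
  assume "c \<ge> 0 \<and> \<sigma> \<le> 1"
  then have "c \<ge> 0" and "\<sigma> - 1 \<le> 0" by auto
  have "(b powr (\<sigma> - 1) - a powr (\<sigma> - 1)) * (a - b) \<ge> 0"
  proof (cases "b \<le> a")
    case True
    with \<open>\<sigma> - 1 \<le> 0\<close> b have "a powr (\<sigma> - 1) \<le> b powr (\<sigma> - 1)" by (rule powr_mono2')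
    with True show ?thesis by simp
  next
    case False
    with \<open>\<sigma> - 1 \<le> 0\<close> a have "b powr (\<sigma> - 1) \<le> a powr (\<sigma> - 1)" by (intro powr_mono2') auto
    with False show ?thesis by (simp add: mult_nonpos_nonpos)
  qed
  with \<open>c \<ge> 0\<close> show ?thesis by (metis mult.assoc mult_nonneg_nonneg)
next
  assume "c \<le> 0 \<and> \<sigma> \<ge> 1"
  then have "c \<le> 0" and "\<sigma> - 1 \<ge> 0" by auto
  have "(b powr (\<sigma> - 1) - a powr (\<sigma> - 1)) * (a - b) \<le> 0"
  proof (cases "b \<le> a")
    case True
    with \<open>\<sigma> - 1 \<ge> 0\<close> b have "b powr (\<sigma> - 1) \<le> a powr (\<sigma> - 1)" by (intro powr_mono2) auto
    with True show ?thesis by (simp add: mult_nonpos_nonneg)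
  next
    case False
    with \<open>\<sigma> - 1 \<ge> 0\<close> a have "a powr (\<sigma> - 1) \<le> b powr (\<sigma> - 1)" by (intro powr_mono2) auto
    with False show ?thesis by (simp add: mult_nonneg_nonpos)
  qed
  with \<open>c \<le> 0\<close> show ?thesis by (metis mult.assoc mult_nonpos_nonpos)
qed

lemma concave_reaction_nonneg:
  fixes \<psi> :: "real \<Rightarrow> real" and a b c \<sigma> :: real
  assumes psi_diff: "\<And>s. s > 0 \<Longrightarrow> \<psi> differentiable (at s)"
    and concave: "concave_on {0<..} \<psi>"
    and crit: "deriv \<psi> 1 = 0"
    and a: "a > 0" and b: "b > 0"
    and sign: "(c \<ge> 0 \<and> \<sigma> \<le> 1) \<or> (c \<le> 0 \<and> \<sigma> \<ge> 1)"
  shows "deriv \<psi> (b / a) * (b / a) * (c * b powr \<sigma> / b - c * a powr \<sigma> / a) \<ge> 0"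
proof -
  let ?p = "deriv \<psi> (b / a)" and ?q = "c * (b powr (\<sigma> - 1) - a powr (\<sigma> - 1))"
  have "?p * (1 - b / a) \<ge> 0"
    using concave_deriv_antimono[OF psi_diff concave _ zero_less_one, of "b / a"] a b crit by simp
  then have p: "?p * (a - b) \<ge> 0"
    using a by (simp add: field_simps zero_le_mult_iff)
  have q: "?q * (a - b) \<ge> 0" by (rule powr_reaction_sign[OF a b sign])
  have pq: "?p * ?q \<ge> 0"
  proof (cases "a = b")
    case False
    with p q show ?thesis by (smt (verit) mult_nonneg_nonneg zero_le_mult_iff)
  qed simp
  have reaction: "c * b powr \<sigma> / b - c * a powr \<sigma> / a = ?q"
    using a b by (simp add: powr_diff algebra_simps)
  have reassoc: "?p * (b / a) * ?q = (b / a) * (?p * ?q)"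
    by (simp only: mult.assoc mult.left_commute)
  have "0 \<le> (b / a) * (?p * ?q)"
    using a b pq by simp
  then show ?thesis
    unfolding reaction reassoc .
qed

lemma OmegaPsi_le_LapPsi_velocity:
  fixes f :: "'v \<Rightarrow> real"
  assumes G: "weighted_graph E w mu"
    and psi_diff: "\<And>s. s > 0 \<Longrightarrow> \<psi> differentiable (at s)"
    and concave: "concave_on {0<..} \<psi>"
    and crit: "deriv \<psi> 1 = 0"
    and pos: "\<And>y. f y > 0"
    and sign: "(c \<ge> 0 \<and> \<sigma> \<le> 1) \<or> (c \<le> 0 \<and> \<sigma> \<ge> 1)"
  shows "OmegaPsi E w mu \<psi> f x
    \<le> LapPsi_velocity E w mu \<psi> f (\<lambda>y. Lap E w mu f y + c * f y powr \<sigma>) x"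
  unfolding OmegaPsi_def LapPsi_velocity_def
proof (rule Lap_mono[OF G])
  fix y
  from concave_reaction_nonneg[OF psi_diff concave crit pos[of x] pos[of y] sign]
  show "deriv \<psi> (f y / f x) * (f y / f x) * (Lap E w mu f y / f y - Lap E w mu f x / f x)
        - deriv \<psi> (f x / f x) * (f x / f x) * (Lap E w mu f x / f x - Lap E w mu f x / f x)
      \<le> deriv \<psi> (f y / f x) * (f y / f x)
          * ((Lap E w mu f y + c * f y powr \<sigma>) / f y - (Lap E w mu f x + c * f x powr \<sigma>) / f x)
        - deriv \<psi> (f x / f x) * (f x / f x)
          * ((Lap E w mu f x + c * f x powr \<sigma>) / f x - (Lap E w mu f x + c * f x powr \<sigma>) / f x)"
    by (simp add: add_divide_distrib algebra_simps)
qed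

lemma Gamma2Psi_mult:
  assumes "f x > 0"
  shows "2 * f x * Gamma2Psi E w mu \<psi> f x
    = f x * OmegaPsi E w mu \<psi> f x + Lap E w mu f x * LapPsi E w mu \<psi> f x
      - Lap E w mu (\<lambda>y. f y * LapPsi E w mu \<psi> f y) x"
proof -
  have "2 * U * ((Om + Lx * L / U - M / U) / 2) = U * Om + Lx * L - M"
    if "U > 0" for U Om Lx L M :: real
    using that by (simp add: field_simps)
  from this[OF assms] show ?thesis unfolding Gamma2Psi_def .
qed

theorem mainTheorem11:
  fixes E :: "'v \<Rightarrow> 'v \<Rightarrow> bool" and w :: "'v \<Rightarrow> 'v \<Rightarrow> real" and mu :: "'v \<Rightarrow> real"
    and \<psi> :: "real \<Rightarrow> real" and \<sigma> :: real and c :: "real \<Rightarrow> real"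
    and u :: "'v \<Rightarrow> real \<Rightarrow> real"
  assumes G: "weighted_graph E w mu"
    and psi_diff: "\<forall>s>0. \<psi> differentiable (at s)"
    and psi_C1: "continuous_on {0<..} (deriv \<psi>)"
    and psi_concave: "concave_on {0<..} \<psi>"
    and psi_crit: "deriv \<psi> 1 = 0"
    and c_cont: "continuous_on {0..} c"
    and c_sign: "((\<forall>t\<ge>0. c t \<ge> 0) \<and> \<sigma> \<le> 1) \<or> ((\<forall>t\<ge>0. c t \<le> 0) \<and> \<sigma> \<ge> 1)"
    and u_pos: "\<forall>x t. t \<ge> 0 \<longrightarrow> u x t > 0"
    and u_eq: "\<forall>x t. t \<ge> 0 \<longrightarrow>
        ((\<lambda>s. u x s) has_real_derivative
           (Lap E w mu (\<lambda>y. u y t) x + c t * u x t powr \<sigma>)) (at t within {0..})"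
    and u_C1: "\<forall>x. continuous_on {0..}
        (\<lambda>t. Lap E w mu (\<lambda>y. u y t) x + c t * u x t powr \<sigma>)"
    and t: "t \<ge> 0"
  shows "\<exists>D. ((\<lambda>s. - u x s * LapPsi E w mu \<psi> (\<lambda>y. u y s) x) has_real_derivative D)
              (at t within {0..})
         \<and> Lap E w mu (\<lambda>y. - u y t * LapPsi E w mu \<psi> (\<lambda>z. u z t) y) x - D
           \<ge> 2 * u x t * Gamma2Psi E w mu \<psi> (\<lambda>y. u y t) x
             + c t * u x t powr \<sigma> * LapPsi E w mu \<psi> (\<lambda>y. u y t) x"
proof -
  define a where "a y = Lap E w mu (\<lambda>z. u z t) y + c t * u y t powr \<sigma>" for y
  define L' where "L' = LapPsi_velocity E w mu \<psi> (\<lambda>y. u y t) a x"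
  have pos: "\<And>y. u y t > 0" using u_pos t by auto
  have du: "\<And>y. ((\<lambda>s. u y s) has_real_derivative a y) (at t within {0..})"
    using u_eq t by (simp add: a_def)
  have "((\<lambda>s. LapPsi E w mu \<psi> (\<lambda>y. u y s) x) has_real_derivative L') (at t within {0..})"
    unfolding L'_def using psi_diff pos du by (intro has_real_derivative_LapPsi) auto
  from DERIV_mult[OF DERIV_minus[OF du] this]
  have deriv: "((\<lambda>s. - u x s * LapPsi E w mu \<psi> (\<lambda>y. u y s) x) has_real_derivative
      - (a x * LapPsi E w mu \<psi> (\<lambda>y. u y t) x + u x t * L')) (at t within {0..})"
    by (simp add: algebra_simps)
  have "(c t \<ge> 0 \<and> \<sigma> \<le> 1) \<or> (c t \<le> 0 \<and> \<sigma> \<ge> 1)" using c_sign t by auto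
  then have "OmegaPsi E w mu \<psi> (\<lambda>y. u y t) x \<le> L'"
    unfolding L'_def a_def[abs_def] using G psi_diff psi_concave psi_crit pos
    by (intro OmegaPsi_le_LapPsi_velocity) auto
  then have "u x t * OmegaPsi E w mu \<psi> (\<lambda>y. u y t) x \<le> u x t * L'"
    using pos by (simp add: mult_left_mono)
  moreover note Gamma2Psi_mult[of "\<lambda>y. u y t" x E w mu \<psi>, OF pos]
  moreover have "Lap E w mu (\<lambda>y. - u y t * LapPsi E w mu \<psi> (\<lambda>z. u z t) y) x
      = - Lap E w mu (\<lambda>y. u y t * LapPsi E w mu \<psi> (\<lambda>z. u z t) y) x"
    using Lap_uminus[of E w mu "\<lambda>y. u y t * LapPsi E w mu \<psi> (\<lambda>z. u z t) y"] by simp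
  ultimately have "Lap E w mu (\<lambda>y. - u y t * LapPsi E w mu \<psi> (\<lambda>z. u z t) y) x
          - - (a x * LapPsi E w mu \<psi> (\<lambda>y. u y t) x + u x t * L')
        \<ge> 2 * u x t * Gamma2Psi E w mu \<psi> (\<lambda>y. u y t) x
          + c t * u x t powr \<sigma> * LapPsi E w mu \<psi> (\<lambda>y. u y t) x"
    unfolding a_def distrib_right by linarith
  with deriv show ?thesis by blast
qed

end
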